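(* Let $X_1,\dots,X_n$ be i.i.d. with probability mass function $h_Q$ for some Borel probability measure $Q$ on $[0,\theta_*]$, and let $\hat Q$ be the nonparametric MLE. For every $\epsilon\in(0,1)$ there is a constant $C=C(\epsilon,\theta_* )>0$ (depending also on the fixed model $w$) such that for every $\delta\in(0,1)$, every $n\ge1$, and every real sequence $(b_x)_{x\ge0}$, $$\Big|\sum_{x=0}^\infty b_x\big(h^{\rm obs}_Q(x)-h_{\hat Q}(x)\big)\Big|\le C\max_{x\ge0}|b_x|\sqrt{\frac{1}{n^{1-\epsilon}\delta^{1+\epsilon}}}$$ holds with probability at least $1-\delta$ (simultaneously for all such sequences).
   Context: Discrete exponential family model: fix $\theta_*>0$ and $w(x)>0$, $x=0,1,2,\dots$, such that $\sum_{x\ge0}w(x)\theta^x$ has radius of convergence $\theta_r\in(0,\infty]$ with $\theta_*<\theta_r$; $g(\theta)=\big(\sum_{x\ge 0}w(x)\theta^x\big)^{-1}$, $f(x\mid\theta)=g(\theta)w(x)\theta^x$, $x\in\{0,1,\dots\}$, $\theta\in[0,\theta_*]$. $h_Q(x)=\int f(x\mid\theta)\,dQ(\theta)$. The MLE is $\hat Q\in\arg\max_{Q}\sum_{i=1}^n\log h_Q(X_i)$ over Borel probability measures on $[0,\theta_*]$. The empirical pmf is $h^{\rm obs}_Q(x)=n^{-1}\sum_{i=1}^n\mathbf 1(X_i=x)$. *)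

theory Defs
  imports "HOL-Analysis.Analysis" "HOL-Probability.Probability"
begin

definition gnorm :: "(nat \<Rightarrow> real) \<Rightarrow> real \<Rightarrow> real" where
  "gnorm w \<theta> = 1 / (\<Sum>x. w x * \<theta> ^ x)"

definition fdens :: "(nat \<Rightarrow> real) \<Rightarrow> nat \<Rightarrow> real \<Rightarrow> real" where
  "fdens w x \<theta> = gnorm w \<theta> * w x * \<theta> ^ x"

definition mixing_measures :: "real \<Rightarrow> real measure set" where
  "mixing_measures \<theta>s = {Q. prob_space Q \<and> sets Q = sets (restrict_space borel {0..\<theta>s})}"

definition hmix :: "(nat \<Rightarrow> real) \<Rightarrow> real measure \<Rightarrow> nat \<Rightarrow> real" where
  "hmix w Q x = (\<integral>\<theta>. fdens w x \<theta> \<partial>Q)"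

definition hmix_pmf :: "(nat \<Rightarrow> real) \<Rightarrow> real measure \<Rightarrow> nat pmf" where
  "hmix_pmf w Q = embed_pmf (hmix w Q)"

definition hobs :: "nat \<Rightarrow> (nat \<Rightarrow> nat) \<Rightarrow> nat \<Rightarrow> real" where
  "hobs n X x = real (card {i. i < n \<and> X i = x}) / real n"

text \<open>Nonparametric MLE: maximizer of sum_i log h_Q(X_i) over mixing measures,
  with the convention log 0 = -infinity (so a maximizer has positive likelihood at
  every observation, and only candidates with positive likelihood compete).\<close>
definition is_npmle :: "(nat \<Rightarrow> real) \<Rightarrow> real \<Rightarrow> nat \<Rightarrow> (nat \<Rightarrow> nat) \<Rightarrow> real measure \<Rightarrow> bool" where
  "is_npmle w \<theta>s n X Qh \<longleftrightarrow>
     Qh \<in> mixing_measures \<theta>s \<and> (\<forall>i<n. hmix w Qh (X i) > 0) \<and>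
     (\<forall>Q \<in> mixing_measures \<theta>s. (\<forall>i<n. hmix w Q (X i) > 0) \<longrightarrow>
        (\<Sum>i<n. ln (hmix w Q (X i))) \<le> (\<Sum>i<n. ln (hmix w Qh (X i))))"

end

theory Submission
  imports Defs
begin

text \<open>
  The NPMLE Qhat has at least the likelihood of the true mixing measure Q. Regrouping the
  log-likelihood by observed values, this says that the Kullback-Leibler divergence from the
  empirical pmf p to h_Qhat is at most the one to h_Q, which in turn is at most the chi-square
  divergence chi2(p, h_Q). Through the Hellinger distance and Cauchy-Schwarz, a bounded sequence b
  then sees a difference between p and h_Qhat of at most 4 sup|b| sqrt(chi2(p, h_Q)).

  The tails of the model decay geometrically, uniformly for theta in [0, theta_*], so with
  probability 1 - delta/2 all observations lie below a cutoff K of order log(n/delta). Then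
  chi2(p, h_Q) is the chi-square statistic truncated at K plus the mass of h_Q beyond K; the
  statistic has expectation at most (K + 1)/n, so by Markov's inequality it is O(K/(n delta))
  with probability 1 - delta/2. Finally log y <= y^eps/eps absorbs the logarithm into the rate
  1/(n^(1-eps) delta^(1+eps)).
\<close>

section \<open>Empirical distributions and divergences\<close>

lemma sum_sample_eq_hobs:
  fixes X :: "nat \<Rightarrow> nat" and G :: "nat \<Rightarrow> real"
  assumes "n \<ge> 1"
  shows "(\<Sum>i<n. G (X i)) = real n * (\<Sum>x\<in>X ` {..<n}. hobs n X x * G x)"
proof -
  have "(\<Sum>i<n. G (X i)) = (\<Sum>x\<in>X ` {..<n}. \<Sum>i\<in>{i. i \<in> {..<n} \<and> X i = x}. G (X i))"
    by (rule sum.image_gen) simp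
  also have "\<dots> = (\<Sum>x\<in>X ` {..<n}. real (card {i. i < n \<and> X i = x}) * G x)"
    by (rule sum.cong) auto
  finally show ?thesis using assms by (simp add: hobs_def sum_distrib_left)
qed

lemma sum_hobs_sample: "n \<ge> 1 \<Longrightarrow> (\<Sum>x\<in>X ` {..<n}. hobs n X x) = 1"
  using sum_sample_eq_hobs[of n "\<lambda>_. 1" X] by simp

lemma hobs_eq_0: "x \<notin> X ` {..<n} \<Longrightarrow> hobs n X x = 0"
  by (auto simp: hobs_def)

lemma hobs_pos:
  assumes "x \<in> X ` {..<n}" shows "hobs n X x > 0"
proof -
  obtain i where "i < n" "X i = x" using assms by auto
  then have "card {i. i < n \<and> X i = x} > 0" by (auto simp: card_gt_0_iff)
  then show ?thesis using \<open>i < n\<close> by (simp add: hobs_def)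
qed

lemma hobs_nonneg: "hobs n X x \<ge> 0"
  by (simp add: hobs_def)

lemma hobs_le_1: "hobs n X x \<le> 1"
  using card_mono[of "{..<n}" "{i. i < n \<and> X i = x}"] by (cases "n = 0") (auto simp: hobs_def)

lemma diff_sqrt_mult_le_mult_ln:
  fixes p h :: real
  assumes "p > 0" "h > 0"
  shows "2 * (p - sqrt (p * h)) \<le> p * ln (p / h)"
proof -
  define u where "u = sqrt (h / p)"
  have u: "u > 0" using assms by (simp add: u_def)
  have "sqrt (p * h) = sqrt (p\<^sup>2 * (h / p))"
    using assms by (simp add: power2_eq_square)
  also have "\<dots> = p * u"
    using assms by (subst real_sqrt_mult) (simp add: u_def)
  finally have "sqrt (p * h) = p * u" .
  moreover have "ln (p / h) = - 2 * ln u"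
    using assms by (simp add: u_def ln_sqrt ln_div)
  moreover have "ln u \<le> u - 1" by (rule ln_le_minus_one[OF u])
  ultimately show ?thesis using assms mult_left_mono[of "1 + ln u" u p] by (simp add: algebra_simps)
qed

lemma hellinger_le_kl_divergence:
  fixes p h :: "'a \<Rightarrow> real"
  assumes "finite S" and p1: "sum p S = 1" and h1: "sum h S \<le> 1"
    and pos: "\<And>x. x \<in> S \<Longrightarrow> p x > 0" "\<And>x. x \<in> S \<Longrightarrow> h x > 0"
  shows "(\<Sum>x\<in>S. (sqrt (p x) - sqrt (h x))\<^sup>2) \<le> (\<Sum>x\<in>S. p x * ln (p x / h x))"
proof -
  have "(\<Sum>x\<in>S. (sqrt (p x) - sqrt (h x))\<^sup>2) = (\<Sum>x\<in>S. p x + h x - 2 * sqrt (p x * h x))"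
    using pos by (intro sum.cong) (auto simp: power2_diff real_sqrt_mult less_imp_le)
  also have "\<dots> = 1 + sum h S - 2 * (\<Sum>x\<in>S. sqrt (p x * h x))"
    by (simp add: sum.distrib sum_subtractf sum_distrib_left p1)
  also have "\<dots> \<le> 2 * (sum p S - (\<Sum>x\<in>S. sqrt (p x * h x)))"
    using p1 h1 by simp
  also have "\<dots> = (\<Sum>x\<in>S. 2 * (p x - sqrt (p x * h x)))"
    by (simp add: sum_subtractf sum_distrib_left)
  also have "\<dots> \<le> (\<Sum>x\<in>S. p x * ln (p x / h x))"
    using pos by (intro sum_mono diff_sqrt_mult_le_mult_ln)
  finally show ?thesis .
qed

lemma sum_pos_part_le_hellinger:
  fixes p h :: "'a \<Rightarrow> real"
  assumes "sum p S \<le> 1" "sum h S \<le> 1"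
    and nonneg: "\<And>x. x \<in> S \<Longrightarrow> p x \<ge> 0" "\<And>x. x \<in> S \<Longrightarrow> h x \<ge> 0"
  shows "(\<Sum>x\<in>S. max (p x - h x) 0) \<le> 2 * sqrt (\<Sum>x\<in>S. (sqrt (p x) - sqrt (h x))\<^sup>2)"
proof -
  let ?d = "\<lambda>x. \<bar>sqrt (p x) - sqrt (h x)\<bar>" and ?s = "\<lambda>x. sqrt (p x) + sqrt (h x)"
  have "(\<Sum>x\<in>S. max (p x - h x) 0) \<le> (\<Sum>x\<in>S. ?d x * ?s x)"
  proof (rule sum_mono)
    fix x assume "x \<in> S"
    then have "p x - h x = (sqrt (p x) - sqrt (h x)) * ?s x"
      using nonneg by (simp add: algebra_simps)
    moreover have "0 \<le> ?s x" using nonneg \<open>x \<in> S\<close> by simp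
    ultimately show "max (p x - h x) 0 \<le> ?d x * ?s x" by (auto intro: mult_right_mono)
  qed
  also have "\<dots> \<le> sqrt ((\<Sum>x\<in>S. (?d x)\<^sup>2) * (\<Sum>x\<in>S. (?s x)\<^sup>2))"
    using Cauchy_Schwarz_ineq_sum[of ?d ?s S] by (intro real_le_rsqrt)
  also have "\<dots> = sqrt (\<Sum>x\<in>S. (?d x)\<^sup>2) * sqrt (\<Sum>x\<in>S. (?s x)\<^sup>2)"
    by (rule real_sqrt_mult)
  also have "\<dots> \<le> sqrt (\<Sum>x\<in>S. (?d x)\<^sup>2) * sqrt 4"
  proof -
    have "(\<Sum>x\<in>S. (?s x)\<^sup>2) \<le> (\<Sum>x\<in>S. 2 * (p x + h x))"
    proof (rule sum_mono)
      fix x assume "x \<in> S"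
      then show "(?s x)\<^sup>2 \<le> 2 * (p x + h x)"
        using nonneg zero_le_power2[of "sqrt (p x) - sqrt (h x)"] by (simp add: power2_eq_square algebra_simps)
    qed
    also have "\<dots> \<le> 4" using assms(1,2) by (simp add: sum.distrib flip: sum_distrib_left)
    finally show ?thesis by (intro mult_left_mono real_sqrt_le_mono) (auto intro: sum_nonneg)
  qed
  finally show ?thesis by (simp add: mult.commute)
qed

lemma kl_divergence_le_chi2:
  fixes p q :: "'a \<Rightarrow> real"
  assumes p1: "sum p S = 1" and pos: "\<And>x. x \<in> S \<Longrightarrow> p x > 0" "\<And>x. x \<in> S \<Longrightarrow> q x > 0"
  shows "(\<Sum>x\<in>S. p x * ln (p x / q x)) \<le> (\<Sum>x\<in>S. (p x)\<^sup>2 / q x) - 1"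
proof -
  have "(\<Sum>x\<in>S. p x * ln (p x / q x)) \<le> (\<Sum>x\<in>S. p x * (p x / q x - 1))"
    using pos by (intro sum_mono mult_left_mono ln_le_minus_one) (auto simp: less_imp_le)
  also have "\<dots> = (\<Sum>x\<in>S. (p x)\<^sup>2 / q x) - 1"
    using p1 by (simp add: right_diff_distrib sum_subtractf power2_eq_square)
  finally show ?thesis .
qed

lemma chi2_eq_truncated:
  fixes p q :: "'a \<Rightarrow> real"
  assumes "finite T" "S \<subseteq> T" and p1: "sum p S = 1"
    and p0: "\<And>x. x \<notin> S \<Longrightarrow> p x = 0" and q: "\<And>x. x \<in> S \<Longrightarrow> q x \<noteq> 0"
  shows "(\<Sum>x\<in>S. (p x)\<^sup>2 / q x) - 1 = (\<Sum>x\<in>T. (p x - q x)\<^sup>2 / q x) + (1 - sum q T)"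
proof -
  have on_T: "sum f S = sum f T" if "\<And>x. x \<notin> S \<Longrightarrow> f x = 0" for f :: "'a \<Rightarrow> real"
    using assms(1,2) that by (intro sum.mono_neutral_left) auto
  \<comment> \<open>Off the support both sides vanish, also where \<open>q x = 0\<close> (division by zero is zero).\<close>
  have "(p x - q x)\<^sup>2 / q x = (p x)\<^sup>2 / q x - 2 * p x + q x" for x
    using q[of x] p0[of x] by (cases "q x = 0") (auto simp: power2_diff field_simps power2_eq_square)
  then have "(\<Sum>x\<in>T. (p x - q x)\<^sup>2 / q x) = (\<Sum>x\<in>T. (p x)\<^sup>2 / q x) - 2 * sum p T + sum q T"
    by (simp add: sum.distrib sum_subtractf sum_distrib_left)
  moreover have "(\<Sum>x\<in>S. (p x)\<^sup>2 / q x) = (\<Sum>x\<in>T. (p x)\<^sup>2 / q x)" "sum p T = 1"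
    using on_T[of "\<lambda>x. (p x)\<^sup>2 / q x"] on_T[of p] p0 p1 by auto
  ultimately show ?thesis by simp
qed

lemma sum_abs_diff_le_pos_part:
  fixes p h :: "nat \<Rightarrow> real"
  assumes "finite S" and p1: "sum p S = 1" and p0: "\<And>x. x \<notin> S \<Longrightarrow> p x = 0"
    and h_nonneg: "\<And>x. 0 \<le> h x" and h_sum: "\<And>F. finite F \<Longrightarrow> sum h F \<le> 1"
  shows "(\<Sum>x<N. \<bar>p x - h x\<bar>) \<le> 2 * (\<Sum>x\<in>S. max (p x - h x) 0)"
proof -
  have "(\<Sum>x<N. \<bar>p x - h x\<bar>) = (\<Sum>x\<in>{..<N} \<inter> S. \<bar>p x - h x\<bar>) + (\<Sum>x\<in>{..<N} - S. h x)"
    using p0 h_nonneg by (simp add: sum.Int_Diff[of "{..<N}" _ S])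
  also have "(\<Sum>x\<in>{..<N} \<inter> S. \<bar>p x - h x\<bar>) \<le> (\<Sum>x\<in>S. \<bar>p x - h x\<bar>)"
    using \<open>finite S\<close> by (intro sum_mono2) auto
  also have "(\<Sum>x\<in>{..<N} - S. h x) \<le> 1 - sum h S"
  proof -
    have "sum h ({..<N} - S) + sum h S = sum h ({..<N} \<union> S)"
      using \<open>finite S\<close> by (subst sum.union_disjoint[symmetric]) (auto intro: arg_cong[of _ _ "sum h"])
    then show ?thesis using h_sum[of "{..<N} \<union> S"] \<open>finite S\<close> by simp
  qed
  also have "(\<Sum>x\<in>S. \<bar>p x - h x\<bar>) + (1 - sum h S) = (\<Sum>x\<in>S. \<bar>p x - h x\<bar> + (p x - h x))"
    using p1 by (simp add: sum.distrib sum_subtractf)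
  also have "\<dots> = 2 * (\<Sum>x\<in>S. max (p x - h x) 0)"
    by (simp add: sum_distrib_left) (auto intro: sum.cong simp: max_def)
  finally show ?thesis by simp
qed

lemma abs_suminf_mult_le:
  fixes b d :: "nat \<Rightarrow> real"
  assumes partial: "\<And>N. (\<Sum>x<N. \<bar>d x\<bar>) \<le> M" and b: "\<And>x. \<bar>b x\<bar> \<le> B"
  shows "\<bar>\<Sum>x. b x * d x\<bar> \<le> B * M"
proof -
  have partial': "(\<Sum>x<N. \<bar>b x * d x\<bar>) \<le> B * M" for N
  proof -
    have "(\<Sum>x<N. \<bar>b x * d x\<bar>) \<le> (\<Sum>x<N. B * \<bar>d x\<bar>)"
      using b by (intro sum_mono) (auto simp: abs_mult intro: mult_right_mono)
    also have "\<dots> \<le> B * M"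
      using partial b[of 0] by (simp add: mult_left_mono flip: sum_distrib_left)
    finally show ?thesis .
  qed
  then have "summable (\<lambda>x. \<bar>b x * d x\<bar>)"
    by (intro summableI_nonneg_bounded) auto
  then show ?thesis
    using summable_rabs suminf_le_const partial' by (meson order_trans)
qed

lemma kl_divergence_hobs_le_of_likelihood_le:
  fixes X :: "nat \<Rightarrow> nat" and h q :: "nat \<Rightarrow> real"
  assumes n: "n \<ge> 1" and h_pos: "\<And>i. i < n \<Longrightarrow> h (X i) > 0" and q_pos: "\<And>i. i < n \<Longrightarrow> q (X i) > 0"
    and lik: "(\<Sum>i<n. ln (q (X i))) \<le> (\<Sum>i<n. ln (h (X i)))"
  shows "(\<Sum>x\<in>X ` {..<n}. hobs n X x * ln (hobs n X x / h x))
    \<le> (\<Sum>x\<in>X ` {..<n}. hobs n X x * ln (hobs n X x / q x))"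
proof -
  let ?S = "X ` {..<n}" and ?p = "hobs n X"
  have "(\<Sum>x\<in>?S. ?p x * ln (?p x / h x)) - (\<Sum>x\<in>?S. ?p x * ln (?p x / q x))
      = (\<Sum>x\<in>?S. ?p x * ln (q x)) - (\<Sum>x\<in>?S. ?p x * ln (h x))"
    unfolding sum_subtractf[symmetric]
  proof (rule sum.cong)
    fix x assume "x \<in> ?S"
    then have "?p x > 0" "h x > 0" "q x > 0" using hobs_pos h_pos q_pos by auto
    then show "?p x * ln (?p x / h x) - ?p x * ln (?p x / q x) = ?p x * ln (q x) - ?p x * ln (h x)"
      by (simp add: ln_div algebra_simps)
  qed simp
  also have "\<dots> \<le> 0"
    using lik n sum_sample_eq_hobs[OF n, of "\<lambda>x. ln (q x)" X] sum_sample_eq_hobs[OF n, of "\<lambda>x. ln (h x)" X]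
    by simp
  finally show ?thesis by simp
qed

lemma likelihood_deviation_le_chi2:
  fixes X :: "nat \<Rightarrow> nat" and b h q :: "nat \<Rightarrow> real"
  assumes n: "n \<ge> 1" and h_nonneg: "\<And>x. 0 \<le> h x" and h_sum: "\<And>F. finite F \<Longrightarrow> sum h F \<le> 1"
    and h_pos: "\<And>i. i < n \<Longrightarrow> h (X i) > 0" and q_pos: "\<And>i. i < n \<Longrightarrow> q (X i) > 0"
    and lik: "(\<Sum>i<n. ln (q (X i))) \<le> (\<Sum>i<n. ln (h (X i)))"
    and b: "\<And>x. \<bar>b x\<bar> \<le> B"
  shows "\<bar>\<Sum>x. b x * (hobs n X x - h x)\<bar>
    \<le> 4 * B * sqrt ((\<Sum>x\<in>X ` {..<n}. (hobs n X x)\<^sup>2 / q x) - 1)"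
proof -
  define S where "S = X ` {..<n}"
  define p where "p = hobs n X"
  have S: "finite S" "sum p S = 1" "\<And>x. x \<notin> S \<Longrightarrow> p x = 0"
    using sum_hobs_sample[OF n] hobs_eq_0 by (auto simp: S_def p_def)
  have pos: "p x > 0" "h x > 0" "q x > 0" if "x \<in> S" for x
    using that h_pos q_pos hobs_pos by (auto simp: S_def p_def)
  have "(\<Sum>x\<in>S. max (p x - h x) 0) \<le> 2 * sqrt (\<Sum>x\<in>S. (sqrt (p x) - sqrt (h x))\<^sup>2)"
    using S h_sum h_nonneg pos by (intro sum_pos_part_le_hellinger) (auto simp: less_imp_le)
  also have "\<dots> \<le> 2 * sqrt (\<Sum>x\<in>S. p x * ln (p x / h x))"
    using S h_sum pos by (simp add: hellinger_le_kl_divergence)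
  also have "\<dots> \<le> 2 * sqrt (\<Sum>x\<in>S. p x * ln (p x / q x))"
    using kl_divergence_hobs_le_of_likelihood_le[of n h X q, OF n h_pos q_pos lik] by (simp add: S_def p_def)
  also have "\<dots> \<le> 2 * sqrt ((\<Sum>x\<in>S. (p x)\<^sup>2 / q x) - 1)"
    using kl_divergence_le_chi2[of p S q] S pos by simp
  finally have "(\<Sum>x<N. \<bar>p x - h x\<bar>) \<le> 2 * (2 * sqrt ((\<Sum>x\<in>S. (p x)\<^sup>2 / q x) - 1))" for N
    using sum_abs_diff_le_pos_part[OF S h_nonneg h_sum, of N] by linarith
  then have "\<bar>\<Sum>x. b x * (p x - h x)\<bar> \<le> B * (2 * (2 * sqrt ((\<Sum>x\<in>S. (p x)\<^sup>2 / q x) - 1)))"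
    by (rule abs_suminf_mult_le[OF _ b])
  then show ?thesis by (simp add: S_def p_def mult_ac)
qed

section \<open>Fluctuations of the empirical distribution\<close>

definition chi2_statistic :: "nat \<Rightarrow> (nat \<Rightarrow> nat) \<Rightarrow> (nat \<Rightarrow> real) \<Rightarrow> nat \<Rightarrow> real" where
  "chi2_statistic n X q K = (\<Sum>x\<le>K. (hobs n X x - q x)\<^sup>2 / q x)"

lemma expectation_Pi_pmf_prod_indicator:
  assumes "finite A" "B \<subseteq> A"
  shows "measure_pmf.expectation (Pi_pmf A d (\<lambda>_. p)) (\<lambda>X. \<Prod>k\<in>B. of_bool (X k = x) :: real)
    = pmf p x ^ card B"
proof -
  let ?E = "Pi A (\<lambda>k. if k \<in> B then {x} else UNIV)"
  have fin: "finite B" using assms finite_subset by blast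
  have "(\<Prod>k\<in>B. of_bool (X k = x) :: real) = indicator ?E X" for X
    using assms fin by (cases "\<forall>k\<in>B. X k = x") (auto simp: indicator_def prod_zero_iff Pi_iff)
  then have "measure_pmf.expectation (Pi_pmf A d (\<lambda>_. p)) (\<lambda>X. \<Prod>k\<in>B. of_bool (X k = x) :: real)
      = measure_pmf.prob (Pi_pmf A d (\<lambda>_. p)) ?E"
    by simp
  also have "\<dots> = (\<Prod>k\<in>A. if k \<in> B then pmf p x else 1)"
    using assms(1) by (simp add: measure_Pi_pmf_Pi measure_pmf_single if_distrib cong: if_cong)
  also have "\<dots> = pmf p x ^ card B"
    using assms by (simp add: prod.If_cases Int_absorb1)
  finally show ?thesis .
qed

lemma hobs_eq_mean_indicator: "hobs n X x = (\<Sum>i<n. of_bool (X i = x)) / real n"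
proof -
  have "{i. i < n \<and> X i = x} = {..<n} \<inter> {i. X i = x}" by auto
  then show ?thesis by (simp add: hobs_def sum.inter_restrict[symmetric])
qed

lemma expectation_hobs_sq_dev_le:
  fixes p :: "nat pmf"
  assumes n: "n \<ge> 1"
  shows "measure_pmf.expectation (Pi_pmf {..<n} d (\<lambda>_. p)) (\<lambda>X. (hobs n X x - pmf p x)\<^sup>2)
    \<le> pmf p x / real n"
proof -
  let ?P = "Pi_pmf {..<n} d (\<lambda>_. p)" and ?E = "measure_pmf.expectation (Pi_pmf {..<n} d (\<lambda>_. p))"
  define q where "q = pmf p x"
  define Y where "Y = (\<lambda>i (X :: nat \<Rightarrow> nat). of_bool (X i = x) :: real)"
  have integrable: "integrable ?P (\<lambda>X. f (Y i X) (Y j X))" for f :: "real \<Rightarrow> real \<Rightarrow> real" and i j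
    by (rule measure_pmf.integrable_const_bound[where B="\<bar>f 0 0\<bar> + \<bar>f 0 1\<bar> + \<bar>f 1 0\<bar> + \<bar>f 1 1\<bar>"])
      (auto simp: Y_def intro!: AE_I2)
  have E_Y: "?E (Y i) = q" if "i < n" for i
    using expectation_Pi_pmf_prod_indicator[of "{..<n}" "{i}" d p x] that by (simp add: Y_def q_def)
  have E_YY: "?E (\<lambda>X. Y i X * Y j X) = (if i = j then q else q\<^sup>2)" if "i < n" "j < n" for i j
    using expectation_Pi_pmf_prod_indicator[of "{..<n}" "{i, j}" d p x] that E_Y
    by (cases "i = j") (simp_all add: Y_def q_def power2_eq_square flip: of_bool_conj)
  have cov: "?E (\<lambda>X. (Y i X - q) * (Y j X - q)) = (if i = j then q - q\<^sup>2 else 0)"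
    if "i < n" "j < n" for i j
  proof -
    have "?E (\<lambda>X. (Y i X - q) * (Y j X - q)) = ?E (\<lambda>X. Y i X * Y j X) - q * ?E (Y i) - q * ?E (Y j) + q\<^sup>2"
      using integrable[of "\<lambda>a c. a * c"] integrable[of "\<lambda>a c. a"] integrable[of "\<lambda>a c. c"]
      by (simp add: algebra_simps power2_eq_square)
    then show ?thesis using E_YY[OF that] E_Y that by (simp add: power2_eq_square)
  qed
  have "(hobs n X x - q)\<^sup>2 = (\<Sum>i<n. \<Sum>j<n. (Y i X - q) * (Y j X - q)) / (real n)\<^sup>2" for X
  proof -
    have "hobs n X x - q = (\<Sum>i<n. Y i X - q) / real n"
      using n by (simp add: hobs_eq_mean_indicator Y_def sum_subtractf field_simps)
    then show ?thesis by (simp add: power_divide power2_eq_square sum_product)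
  qed
  then have "?E (\<lambda>X. (hobs n X x - q)\<^sup>2) = (\<Sum>i<n. \<Sum>j<n. ?E (\<lambda>X. (Y i X - q) * (Y j X - q))) / (real n)\<^sup>2"
    using integrable[of "\<lambda>a c. (a - q) * (c - q)"] by simp
  also have "\<dots> = (q - q\<^sup>2) / real n"
    using n by (simp add: cov power2_eq_square)
  also have "\<dots> \<le> q / real n"
    by (simp add: divide_right_mono)
  finally show ?thesis by (simp add: q_def)
qed

lemma integrable_chi2_term:
  fixes p :: "nat pmf"
  shows "integrable (measure_pmf P) (\<lambda>X. (hobs n X x - pmf p x)\<^sup>2 / pmf p x)"
proof (rule measure_pmf.integrable_const_bound[where B="1 / pmf p x"])
  have "\<bar>hobs n X x - pmf p x\<bar> \<le> 1" for X
    using hobs_nonneg[of n X x] hobs_le_1[of n X x] pmf_le_1[of p x] pmf_nonneg[of p x] by linarith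
  then have "(hobs n X x - pmf p x)\<^sup>2 \<le> 1" for X
    by (simp add: abs_le_square_iff[of _ 1, simplified])
  then show "AE X in measure_pmf P. norm ((hobs n X x - pmf p x)\<^sup>2 / pmf p x) \<le> 1 / pmf p x"
    by (intro AE_I2) (simp add: divide_right_mono)
qed simp

lemma expectation_chi2_statistic_le:
  fixes p :: "nat pmf"
  assumes n: "n \<ge> 1"
  shows "measure_pmf.expectation (Pi_pmf {..<n} d (\<lambda>_. p)) (\<lambda>X. chi2_statistic n X (pmf p) K)
    \<le> real (K+1) / real n"
proof -
  let ?E = "measure_pmf.expectation (Pi_pmf {..<n} d (\<lambda>_. p))"
  have term_le: "?E (\<lambda>X. (hobs n X x - pmf p x)\<^sup>2 / pmf p x) \<le> 1 / real n" for x
  proof (cases "pmf p x = 0")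
    case False
    then have "?E (\<lambda>X. (hobs n X x - pmf p x)\<^sup>2) / pmf p x \<le> (pmf p x / real n) / pmf p x"
      using expectation_hobs_sq_dev_le[OF n, of d p x] by (intro divide_right_mono) auto
    with False show ?thesis by simp
  qed simp
  have "?E (\<lambda>X. chi2_statistic n X (pmf p) K) = (\<Sum>x\<le>K. ?E (\<lambda>X. (hobs n X x - pmf p x)\<^sup>2 / pmf p x))"
    unfolding chi2_statistic_def
    by (intro Bochner_Integration.integral_sum integrable_chi2_term)
  also have "\<dots> \<le> (\<Sum>x\<le>K. 1 / real n)"
    by (intro sum_mono term_le)
  finally show ?thesis by simp
qed

lemma prob_Pi_pmf_exists_gt_le:
  fixes p :: "nat pmf"
  shows "measure_pmf.prob (Pi_pmf {..<n} d (\<lambda>_. p)) {X. \<exists>i<n. X i > K}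
    \<le> real n * (1 - (\<Sum>x\<le>K. pmf p x))"
proof -
  let ?P = "Pi_pmf {..<n} d (\<lambda>_. p)"
  have component: "measure_pmf.prob ?P {X. X i > K} = 1 - (\<Sum>x\<le>K. pmf p x)" if "i < n" for i
  proof -
    have "{X. X i > K} = (\<lambda>X. X i) -` (space (measure_pmf p) - {..K})" by auto
    then have "measure_pmf.prob ?P {X. X i > K} = measure_pmf.prob p (space (measure_pmf p) - {..K})"
      using that by (simp add: Pi_pmf_component flip: measure_map_pmf)
    also have "\<dots> = 1 - measure_pmf.prob p {..K}"
      by (rule measure_pmf.prob_compl) simp
    finally show ?thesis by (simp add: measure_measure_pmf_finite)
  qed
  have "measure_pmf.prob ?P (\<Union>i<n. {X. X i > K}) \<le> (\<Sum>i<n. measure_pmf.prob ?P {X. X i > K})"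
    by (rule measure_pmf.finite_measure_subadditive_finite) auto
  also have "\<dots> = real n * (1 - (\<Sum>x\<le>K. pmf p x))"
    by (simp add: component)
  moreover have "{X. \<exists>i<n. X i > K} = (\<Union>i<n. {X. X i > K})" by auto
  ultimately show ?thesis by simp
qed

lemma prob_sample_le_and_chi2_statistic_less:
  fixes p :: "nat pmf"
  assumes n: "n \<ge> 1" and \<delta>: "\<delta> > 0" and tail: "1 - (\<Sum>x\<le>K. pmf p x) \<le> \<delta> / (2 * real n)"
  shows "1 - \<delta> \<le> measure_pmf.prob (Pi_pmf {..<n} d (\<lambda>_. p))
    {X. (\<forall>i<n. X i \<le> K) \<and> chi2_statistic n X (pmf p) K < 2 * real (K+1) / (real n * \<delta>)}"
proof -
  let ?P = "Pi_pmf {..<n} d (\<lambda>_. p)" and ?s = "2 * real (K+1) / (real n * \<delta>)"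
  let ?chi = "\<lambda>X. chi2_statistic n X (pmf p) K"
  have "measure_pmf.prob ?P {X. \<exists>i<n. X i > K} \<le> real n * (\<delta> / (2 * real n))"
    using prob_Pi_pmf_exists_gt_le[of n d p K] mult_left_mono[OF tail, of "real n"] by linarith
  then have outside: "measure_pmf.prob ?P {X. \<exists>i<n. X i > K} \<le> \<delta> / 2"
    using n by simp
  have "integrable (measure_pmf ?P) ?chi"
    unfolding chi2_statistic_def by (intro Bochner_Integration.integrable_sum integrable_chi2_term)
  then have "measure_pmf.prob ?P {X \<in> space (measure_pmf ?P). ?chi X \<ge> ?s} \<le> measure_pmf.expectation ?P ?chi / ?s"
    using n \<delta> unfolding chi2_statistic_def
    by (intro integral_Markov_inequality_measure[where A=UNIV]) (auto intro!: sum_nonneg divide_nonneg_nonneg)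
  also have "\<dots> \<le> (real (K+1) / real n) / ?s"
    using expectation_chi2_statistic_le[OF n, of d p K] n \<delta> by (intro divide_right_mono) auto
  also have "\<dots> = \<delta> / 2"
  proof -
    have "(a / m) / (2 * a / (m * \<delta>)) = \<delta> / 2" if "a > 0" "m > 0" for a m :: real
      using that \<delta> by (simp add: field_simps)
    moreover have "real (K+1) > 0" "real n > 0" using n by auto
    ultimately show ?thesis by blast
  qed
  finally have large: "measure_pmf.prob ?P {X. ?chi X \<ge> ?s} \<le> \<delta> / 2"
    by simp
  have "measure_pmf.prob ?P ({X. \<exists>i<n. X i > K} \<union> {X. ?chi X \<ge> ?s}) \<le> \<delta>"
    using measure_subadditive[of "{X. \<exists>i<n. X i > K}" ?P "{X. ?chi X \<ge> ?s}"]
      outside large by simp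
  moreover have "{X. (\<forall>i<n. X i \<le> K) \<and> ?chi X < ?s}
      = space (measure_pmf ?P) - ({X. \<exists>i<n. X i > K} \<union> {X. ?chi X \<ge> ?s})"
    by auto
  ultimately show ?thesis
    using measure_pmf.prob_compl[of "{X. \<exists>i<n. X i > K} \<union> {X. ?chi X \<ge> ?s}" ?P] by simp
qed

section \<open>Choice of the cutoff\<close>

lemma ln_le_powr_div:
  fixes y e :: real assumes "y > 0" "e > 0" shows "ln y \<le> y powr e / e"
proof -
  have "ln (y powr e) \<le> y powr e - 1" using assms by (intro ln_le_minus_one) simp
  then show ?thesis using assms by (simp add: ln_powr field_simps)
qed

lemma power_nat_ceiling_log_le:
  fixes \<rho> y :: real assumes \<rho>: "0 < \<rho>" "\<rho> < 1" and y: "1 \<le> y"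
  shows "\<rho> ^ nat \<lceil>ln y / - ln \<rho>\<rceil> \<le> 1 / y"
proof -
  let ?K = "nat \<lceil>ln y / - ln \<rho>\<rceil>"
  have "ln y / - ln \<rho> \<le> real ?K" by linarith
  then have "real ?K * ln \<rho> \<le> - ln y" using \<rho> by (simp add: field_simps)
  then have "exp (real ?K * ln \<rho>) \<le> exp (- ln y)" by (rule exp_mono)
  moreover have "exp (real ?K * ln \<rho>) = \<rho> ^ ?K" unfolding exp_of_nat_mult using \<rho> by simp
  ultimately show ?thesis using y by (simp add: exp_minus inverse_eq_divide)
qed

lemma nat_ceiling_log_le_powr:
  fixes \<kappa> y \<epsilon> :: real assumes \<kappa>: "\<kappa> > 0" and y: "1 \<le> y" and \<epsilon>: "\<epsilon> > 0"
  shows "real (nat \<lceil>ln y / \<kappa>\<rceil>) \<le> y powr \<epsilon> / (\<epsilon> * \<kappa>) + 1"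
proof -
  have "real (nat \<lceil>ln y / \<kappa>\<rceil>) \<le> ln y / \<kappa> + 1"
    using y \<kappa> by (simp add: of_nat_nat)
  also have "ln y / \<kappa> \<le> y powr \<epsilon> / \<epsilon> / \<kappa>"
    using divide_right_mono[OF ln_le_powr_div[of y \<epsilon>], of \<kappa>] y \<epsilon> \<kappa> by simp
  finally show ?thesis by simp
qed

lemma powr_rate_eq:
  fixes n \<delta> \<epsilon> :: real assumes "n > 0" "\<delta> > 0"
  shows "(n / \<delta>) powr \<epsilon> / (n * \<delta>) = 1 / (n powr (1 - \<epsilon>) * \<delta> powr (1 + \<epsilon>))"
  using assms by (simp add: powr_divide powr_diff powr_add field_simps)

lemma geometric_cutoff:
  fixes \<epsilon> A \<rho> :: real
  assumes \<epsilon>: "\<epsilon> > 0" and A: "A \<ge> 1" and \<rho>: "0 < \<rho>" "\<rho> < 1"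
  obtains c where "c > 0"
    "\<And>n \<delta>. n \<ge> 1 \<Longrightarrow> 0 < \<delta> \<Longrightarrow> \<delta> < 1 \<Longrightarrow> \<exists>K. A * \<rho> ^ (K+1) \<le> \<delta> / (2 * real n) \<and>
       2 * real (K+1) / (real n * \<delta>) + \<delta> / (2 * real n)
         \<le> c * (1 / (real n powr (1 - \<epsilon>) * \<delta> powr (1 + \<epsilon>)))"
proof -
  define \<kappa> where "\<kappa> = - ln \<rho>"
  have \<kappa>: "\<kappa> > 0" using \<rho> by (simp add: \<kappa>_def)
  define D where "D = (2 * A) powr \<epsilon> / (\<epsilon> * \<kappa>)"
  have D: "D \<ge> 0" using \<epsilon> \<kappa> by (simp add: D_def)
  define c where "c = 2 * D + 5"
  have "\<exists>K. A * \<rho> ^ (K+1) \<le> \<delta> / (2 * real n) \<and>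
       2 * real (K+1) / (real n * \<delta>) + \<delta> / (2 * real n)
         \<le> c * (1 / (real n powr (1 - \<epsilon>) * \<delta> powr (1 + \<epsilon>)))"
    if n: "n \<ge> 1" and \<delta>: "0 < \<delta>" "\<delta> < 1" for n \<delta>
  proof (intro exI conjI)
    define y where "y = 2 * A * (real n / \<delta>)"
    have "1 \<le> A * real n" using A n mult_mono[of 1 A 1 "real n"] by simp
    then have y: "y \<ge> 1" using \<delta> by (simp add: y_def)
    define K where "K = nat \<lceil>ln y / \<kappa>\<rceil>"
    have "\<rho> ^ (K+1) \<le> \<rho> ^ K" using \<rho> by (intro power_decreasing) auto
    also have "\<rho> ^ K \<le> 1 / y" unfolding K_def \<kappa>_def by (rule power_nat_ceiling_log_le[OF \<rho> y])
    finally have "A * \<rho> ^ (K+1) \<le> A * (1 / y)" using A by (intro mult_left_mono) auto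
    then show "A * \<rho> ^ (K+1) \<le> \<delta> / (2 * real n)"
      using A \<delta> n by (simp add: y_def field_simps)
    define Z where "Z = (real n / \<delta>) powr \<epsilon>"
    have Z: "Z \<ge> 1" using n \<delta> \<epsilon> by (simp add: Z_def ge_one_powr_ge_zero)
    have "y powr \<epsilon> = (2 * A) powr \<epsilon> * Z"
      using A \<delta> by (simp only: y_def Z_def powr_mult)
    then have "real K \<le> D * Z + 1"
      using nat_ceiling_log_le_powr[OF \<kappa> y \<epsilon>] by (simp add: K_def D_def)
    moreover have "c * Z = 2 * (D * Z) + 5 * Z" by (simp add: c_def algebra_simps)
    ultimately have "2 * real K + 3 \<le> c * Z" using Z by linarith
    have "2 * real (K+1) / (real n * \<delta>) + \<delta> / (2 * real n) \<le> (2 * real K + 3) / (real n * \<delta>)"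
      using n \<delta> mult_le_one[of \<delta> \<delta>] by (simp add: field_simps)
    also have "\<dots> \<le> c * (Z / (real n * \<delta>))"
      using \<open>2 * real K + 3 \<le> c * Z\<close> n \<delta> by (simp add: divide_right_mono)
    also have "Z / (real n * \<delta>) = 1 / (real n powr (1 - \<epsilon>) * \<delta> powr (1 + \<epsilon>))"
      using powr_rate_eq[of "real n" \<delta> \<epsilon>] n \<delta> by (simp add: Z_def)
    finally show "2 * real (K+1) / (real n * \<delta>) + \<delta> / (2 * real n)
        \<le> c * (1 / (real n powr (1 - \<epsilon>) * \<delta> powr (1 + \<epsilon>)))" .
  qed
  moreover have "c > 0" using D by (simp add: c_def)
  ultimately show thesis by (rule that[rotated])
qed

section \<open>The discrete exponential family\<close>

locale discrete_exp_family =
  fixes w :: "nat \<Rightarrow> real" and \<theta>s :: real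
  assumes \<theta>s_pos: "\<theta>s > 0"
    and w_pos: "\<And>x. w x > 0"
    and radius: "ereal \<theta>s < conv_radius w"
begin

lemma summable_weight_series:
  assumes "\<theta> \<in> {0..\<theta>s}" shows "summable (\<lambda>x. w x * \<theta> ^ x)"
proof (rule summable_in_conv_radius)
  have "ereal (norm \<theta>) \<le> ereal \<theta>s" using assms by auto
  then show "ereal (norm \<theta>) < conv_radius w" using radius by (meson order.strict_trans1)
qed

lemma w0_le_weight_series:
  assumes "\<theta> \<in> {0..\<theta>s}" shows "w 0 \<le> (\<Sum>x. w x * \<theta> ^ x)"
  using sum_le_suminf[OF summable_weight_series[OF assms], of "{0}"] assms w_pos
  by (simp add: less_imp_le)

lemma weight_series_pos:
  assumes "\<theta> \<in> {0..\<theta>s}" shows "0 < (\<Sum>x. w x * \<theta> ^ x)"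
  using w0_le_weight_series[OF assms] w_pos[of 0] by linarith

lemma fdens_nonneg:
  assumes "\<theta> \<in> {0..\<theta>s}" shows "0 \<le> fdens w x \<theta>"
  using weight_series_pos[OF assms] w_pos[of x] assms
  by (auto simp: fdens_def gnorm_def intro!: mult_nonneg_nonneg less_imp_le)

lemma fdens_sums:
  assumes "\<theta> \<in> {0..\<theta>s}" shows "(\<lambda>x. fdens w x \<theta>) sums 1"
proof -
  have "(\<lambda>x. gnorm w \<theta> * (w x * \<theta> ^ x)) sums (gnorm w \<theta> * (\<Sum>x. w x * \<theta> ^ x))"
    by (intro sums_mult summable_sums summable_weight_series assms)
  moreover have "gnorm w \<theta> * (\<Sum>x. w x * \<theta> ^ x) = 1"
    using weight_series_pos[OF assms] by (simp add: gnorm_def)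
  ultimately show ?thesis by (simp add: fdens_def mult.assoc)
qed

lemma sum_fdens_le_1:
  assumes "\<theta> \<in> {0..\<theta>s}" "finite F" shows "(\<Sum>x\<in>F. fdens w x \<theta>) \<le> 1"
  using sum_le_suminf[of "\<lambda>x. fdens w x \<theta>" F] fdens_sums[OF assms(1)] fdens_nonneg[OF assms(1)] assms(2)
  by (simp add: sums_iff)

lemma fdens_le_scaled_weight:
  assumes \<theta>: "\<theta> \<in> {0..\<theta>s}" and \<theta>1: "\<theta>s < \<theta>1"
  shows "fdens w m \<theta> \<le> (\<theta>s / \<theta>1) ^ m / w 0 * (w m * \<theta>1 ^ m)"
proof -
  have gnorm: "gnorm w \<theta> \<le> 1 / w 0" "0 \<le> gnorm w \<theta>"
    using w0_le_weight_series[OF \<theta>] weight_series_pos[OF \<theta>] w_pos[of 0]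
    by (auto simp: gnorm_def intro: frac_le)
  have "\<theta> ^ m \<le> \<theta>s ^ m" using \<theta> by (intro power_mono) auto
  also have "\<dots> = (\<theta>s / \<theta>1) ^ m * \<theta>1 ^ m"
    using \<theta>1 \<theta>s_pos by (simp add: power_divide)
  finally have "gnorm w \<theta> * (w m * \<theta> ^ m) \<le> 1 / w 0 * (w m * ((\<theta>s / \<theta>1) ^ m * \<theta>1 ^ m))"
    using gnorm \<theta> w_pos[of m] w_pos[of 0] by (intro mult_mono mult_left_mono) auto
  then show ?thesis by (simp add: fdens_def mult_ac)
qed

lemma fdens_tail_le:
  assumes \<theta>: "\<theta> \<in> {0..\<theta>s}" and \<theta>1: "\<theta>s < \<theta>1" and summable1: "summable (\<lambda>x. w x * \<theta>1 ^ x)"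
  shows "1 - (\<Sum>x\<le>K. fdens w x \<theta>) \<le> (\<Sum>x. w x * \<theta>1 ^ x) / w 0 * (\<theta>s / \<theta>1) ^ (K+1)"
proof -
  define \<rho> where "\<rho> = \<theta>s / \<theta>1"
  have \<rho>: "0 < \<rho>" "\<rho> < 1" using \<theta>1 \<theta>s_pos by (auto simp: \<rho>_def)
  have nonneg1: "0 \<le> w x * \<theta>1 ^ x" for x using w_pos[of x] \<theta>1 \<theta>s_pos by simp
  have summable_f: "summable (\<lambda>x. fdens w x \<theta>)" and sum_f: "(\<Sum>x. fdens w x \<theta>) = 1"
    using fdens_sums[OF \<theta>] by (simp_all add: sums_iff)
  have "(\<Sum>x. fdens w x \<theta>) = (\<Sum>m. fdens w (m + Suc K) \<theta>) + (\<Sum>x<Suc K. fdens w x \<theta>)"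
    by (rule suminf_split_initial_segment[OF summable_f])
  then have tail: "1 - (\<Sum>x\<le>K. fdens w x \<theta>) = (\<Sum>m. fdens w (m + Suc K) \<theta>)"
    unfolding sum_f lessThan_Suc_atMost by linarith
  have term_le: "fdens w (m + Suc K) \<theta> \<le> \<rho> ^ (K+1) / w 0 * (w (m + Suc K) * \<theta>1 ^ (m + Suc K))" for m
  proof -
    have "\<rho> ^ (m + Suc K) \<le> \<rho> ^ (K+1)" using \<rho> by (intro power_decreasing) auto
    then have "\<rho> ^ (m + Suc K) / w 0 * (w (m + Suc K) * \<theta>1 ^ (m + Suc K))
        \<le> \<rho> ^ (K+1) / w 0 * (w (m + Suc K) * \<theta>1 ^ (m + Suc K))"
      using w_pos[of 0] nonneg1[of "m + Suc K"] by (intro mult_right_mono divide_right_mono) (auto simp: less_imp_le)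
    then show ?thesis using fdens_le_scaled_weight[OF \<theta> \<theta>1, of "m + Suc K"] unfolding \<rho>_def by linarith
  qed
  have summable_tail1: "summable (\<lambda>m. w (m + Suc K) * \<theta>1 ^ (m + Suc K))"
    using summable1 by (subst summable_iff_shift)
  have "summable (\<lambda>m. fdens w (m + Suc K) \<theta>)"
    using summable_f by (subst summable_iff_shift)
  then have "(\<Sum>m. fdens w (m + Suc K) \<theta>) \<le> (\<Sum>m. \<rho> ^ (K+1) / w 0 * (w (m + Suc K) * \<theta>1 ^ (m + Suc K)))"
    using summable_tail1 by (intro suminf_le term_le summable_mult)
  also have "\<dots> = \<rho> ^ (K+1) / w 0 * (\<Sum>m. w (m + Suc K) * \<theta>1 ^ (m + Suc K))"
    by (rule suminf_mult[OF summable_tail1])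
  also have "\<dots> \<le> \<rho> ^ (K+1) / w 0 * (\<Sum>x. w x * \<theta>1 ^ x)"
  proof -
    have "(\<Sum>x. w x * \<theta>1 ^ x) = (\<Sum>m. w (m + Suc K) * \<theta>1 ^ (m + Suc K)) + (\<Sum>x<Suc K. w x * \<theta>1 ^ x)"
      by (rule suminf_split_initial_segment[OF summable1])
    moreover have "0 \<le> (\<Sum>x<Suc K. w x * \<theta>1 ^ x)" using nonneg1 by (intro sum_nonneg) auto
    ultimately show ?thesis using \<rho> w_pos[of 0] by (intro mult_left_mono) auto
  qed
  also have "\<dots> = (\<Sum>x. w x * \<theta>1 ^ x) / w 0 * \<rho> ^ (K+1)" by simp
  finally show ?thesis unfolding tail \<rho>_def .
qed

lemma fdens_tail_geometric:
  obtains A \<rho> where "1 \<le> A" "0 < \<rho>" "\<rho> < 1"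
    "\<And>\<theta> K. \<theta> \<in> {0..\<theta>s} \<Longrightarrow> 1 - (\<Sum>x\<le>K. fdens w x \<theta>) \<le> A * \<rho> ^ (K+1)"
proof -
  obtain \<theta>1 where \<theta>1: "ereal \<theta>s < ereal \<theta>1" "ereal \<theta>1 < conv_radius w"
    using ereal_dense2[OF radius] by blast
  then have "\<theta>s < \<theta>1" by simp
  have summable1: "summable (\<lambda>x. w x * \<theta>1 ^ x)"
    by (rule summable_in_conv_radius) (use \<theta>1 \<open>\<theta>s < \<theta>1\<close> \<theta>s_pos in auto)
  define A where "A = max 1 ((\<Sum>x. w x * \<theta>1 ^ x) / w 0)"
  have "1 - (\<Sum>x\<le>K. fdens w x \<theta>) \<le> A * (\<theta>s / \<theta>1) ^ (K+1)" if "\<theta> \<in> {0..\<theta>s}" for \<theta> K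
  proof -
    have "(\<Sum>x. w x * \<theta>1 ^ x) / w 0 * (\<theta>s / \<theta>1) ^ (K+1) \<le> A * (\<theta>s / \<theta>1) ^ (K+1)"
      using \<open>\<theta>s < \<theta>1\<close> \<theta>s_pos by (intro mult_right_mono) (auto simp: A_def)
    then show ?thesis using fdens_tail_le[OF that \<open>\<theta>s < \<theta>1\<close> summable1, of K] by linarith
  qed
  then show thesis
    using that[of A "\<theta>s / \<theta>1"] \<open>\<theta>s < \<theta>1\<close> \<theta>s_pos by (simp add: A_def)
qed

lemma space_mixing_measure:
  assumes "Q \<in> mixing_measures \<theta>s" shows "space Q = {0..\<theta>s}"
  using sets_eq_imp_space_eq[of Q "restrict_space borel {0..\<theta>s}"] assms
  by (simp add: mixing_measures_def)

lemma borel_measurable_fdens: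
  assumes "Q \<in> mixing_measures \<theta>s" shows "fdens w x \<in> borel_measurable Q"
proof -
  have series: "(\<lambda>\<theta>. \<Sum>x. w x * \<theta> ^ x) \<in> borel_measurable (restrict_space borel {0..\<theta>s})"
  proof (rule borel_measurable_LIMSEQ_real[where u="\<lambda>i \<theta>. \<Sum>x<i. w x * \<theta> ^ x"])
    fix \<theta> assume "\<theta> \<in> space (restrict_space borel {0..\<theta>s})"
    then show "(\<lambda>i. \<Sum>x<i. w x * \<theta> ^ x) \<longlonglongrightarrow> (\<Sum>x. w x * \<theta> ^ x)"
      by (intro summable_LIMSEQ summable_weight_series) simp
  qed (rule measurable_restrict_space1, measurable)
  have "(\<lambda>\<theta>::real. w x * \<theta> ^ x) \<in> borel_measurable (restrict_space borel {0..\<theta>s})"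
    by (rule measurable_restrict_space1) measurable
  with series have "fdens w x \<in> borel_measurable (restrict_space borel {0..\<theta>s})"
    unfolding fdens_def gnorm_def mult.assoc by measurable
  moreover have "sets Q = sets (restrict_space borel {0..\<theta>s})"
    using assms by (simp add: mixing_measures_def)
  ultimately show ?thesis using measurable_cong_sets by blast
qed

lemma integrable_fdens:
  assumes Q: "Q \<in> mixing_measures \<theta>s" shows "integrable Q (fdens w x)"
proof -
  interpret prob_space Q using Q by (simp add: mixing_measures_def)
  show ?thesis
  proof (rule integrable_const_bound[where B=1])
    show "AE \<theta> in Q. norm (fdens w x \<theta>) \<le> 1"
      using fdens_nonneg sum_fdens_le_1[of _ "{x}"] space_mixing_measure[OF Q] by (intro AE_I2) auto
  qed (rule borel_measurable_fdens[OF Q])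
qed

lemma hmix_nonneg:
  assumes "Q \<in> mixing_measures \<theta>s" shows "0 \<le> hmix w Q x"
  unfolding hmix_def using fdens_nonneg space_mixing_measure[OF assms]
  by (intro integral_nonneg_AE AE_I2) auto

lemma sum_hmix_le_1:
  assumes Q: "Q \<in> mixing_measures \<theta>s" and "finite F" shows "(\<Sum>x\<in>F. hmix w Q x) \<le> 1"
proof -
  interpret prob_space Q using Q by (simp add: mixing_measures_def)
  have "(\<Sum>x\<in>F. hmix w Q x) = (\<integral>\<theta>. (\<Sum>x\<in>F. fdens w x \<theta>) \<partial>Q)"
    unfolding hmix_def using integrable_fdens[OF Q] by (simp add: Bochner_Integration.integral_sum)
  also have "\<dots> \<le> (\<integral>\<theta>. 1 \<partial>Q)"
    using sum_fdens_le_1 space_mixing_measure[OF Q] \<open>finite F\<close> integrable_fdens[OF Q]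
    by (intro integral_mono_AE AE_I2) auto
  finally show ?thesis by (simp add: prob_space)
qed

lemma hmix_tail_le:
  assumes Q: "Q \<in> mixing_measures \<theta>s"
    and tail: "\<And>\<theta>. \<theta> \<in> {0..\<theta>s} \<Longrightarrow> 1 - (\<Sum>x\<le>K. fdens w x \<theta>) \<le> c"
  shows "1 - (\<Sum>x\<le>K. hmix w Q x) \<le> c"
proof -
  interpret prob_space Q using Q by (simp add: mixing_measures_def)
  have "1 - (\<Sum>x\<le>K. hmix w Q x) = (\<integral>\<theta>. 1 - (\<Sum>x\<le>K. fdens w x \<theta>) \<partial>Q)"
    unfolding hmix_def using integrable_fdens[OF Q]
    by (simp add: Bochner_Integration.integral_sum Bochner_Integration.integral_diff prob_space)
  also have "\<dots> \<le> (\<integral>\<theta>. c \<partial>Q)"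
    using tail space_mixing_measure[OF Q] integrable_fdens[OF Q]
    by (intro integral_mono_AE AE_I2) auto
  finally show ?thesis by (simp add: prob_space)
qed

lemma hmix_tail_geometric:
  obtains A \<rho> where "1 \<le> A" "0 < \<rho>" "\<rho> < 1"
    "\<And>Q K. Q \<in> mixing_measures \<theta>s \<Longrightarrow> 1 - (\<Sum>x\<le>K. hmix w Q x) \<le> A * \<rho> ^ (K+1)"
proof -
  obtain A \<rho> where "1 \<le> A" "0 < \<rho>" "\<rho> < 1"
    and "\<And>\<theta> K. \<theta> \<in> {0..\<theta>s} \<Longrightarrow> 1 - (\<Sum>x\<le>K. fdens w x \<theta>) \<le> A * \<rho> ^ (K+1)"
    using fdens_tail_geometric by blast
  with hmix_tail_le show thesis using that by blast
qed

lemma hmix_sums: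
  assumes Q: "Q \<in> mixing_measures \<theta>s" shows "hmix w Q sums 1"
proof -
  obtain A \<rho> where A: "1 \<le> A" "0 < \<rho>" "\<rho> < 1"
    and tail: "\<And>K. 1 - (\<Sum>x\<le>K. hmix w Q x) \<le> A * \<rho> ^ (K+1)"
    by (rule hmix_tail_geometric) (use Q in auto)
  have lower: "1 - A * \<rho> ^ K \<le> (\<Sum>x<K. hmix w Q x)" for K
  proof (cases K)
    case (Suc k)
    then show ?thesis using tail[of k] by (simp add: lessThan_Suc_atMost)
  qed (use A in simp)
  have lim: "(\<lambda>K. 1 - A * \<rho> ^ K) \<longlonglongrightarrow> 1"
    using A by (intro tendsto_eq_intros LIMSEQ_power_zero) auto
  have "(\<lambda>K. \<Sum>x<K. hmix w Q x) \<longlonglongrightarrow> 1"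
  proof (rule real_tendsto_sandwich[OF _ _ lim tendsto_const])
    show "\<forall>\<^sub>F K in sequentially. 1 - A * \<rho> ^ K \<le> (\<Sum>x<K. hmix w Q x)"
      using lower by simp
    show "\<forall>\<^sub>F K in sequentially. (\<Sum>x<K. hmix w Q x) \<le> 1"
      using sum_hmix_le_1[OF Q] by simp
  qed
  then show ?thesis by (simp add: sums_def)
qed

lemma pmf_hmix_pmf:
  assumes Q: "Q \<in> mixing_measures \<theta>s" shows "pmf (hmix_pmf w Q) = hmix w Q"
proof
  fix x
  have "(\<integral>\<^sup>+y. ennreal (hmix w Q y) \<partial>count_space UNIV) = (\<Sum>y. ennreal (hmix w Q y))"
    by (rule nn_integral_count_space_nat)
  also have "\<dots> = ennreal (\<Sum>y. hmix w Q y)"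
    using hmix_sums[OF Q] hmix_nonneg[OF Q] by (intro suminf_ennreal2) (auto simp: sums_iff)
  also have "\<dots> = 1" using hmix_sums[OF Q] by (simp add: sums_iff)
  finally show "pmf (hmix_pmf w Q) x = hmix w Q x"
    unfolding hmix_pmf_def using hmix_nonneg[OF Q] by (subst pmf_embed_pmf) auto
qed

section \<open>Deviation of the NPMLE\<close>

lemma hmix_pos_on_sample:
  fixes n :: nat
  assumes Q: "Q \<in> mixing_measures \<theta>s"
    and X: "X \<in> set_pmf (Pi_pmf {..<n} d (\<lambda>_. hmix_pmf w Q))" and "i < n"
  shows "hmix w Q (X i) > 0"
proof -
  have "X i \<in> set_pmf (hmix_pmf w Q)"
    using X \<open>i < n\<close> by (simp add: set_Pi_pmf PiE_dflt_def)
  then show ?thesis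
    using hmix_nonneg[OF Q, of "X i"] by (simp add: set_pmf_iff pmf_hmix_pmf[OF Q])
qed

lemma npmle_deviation_le_chi2_statistic:
  assumes Q: "Q \<in> mixing_measures \<theta>s" and n: "n \<ge> 1"
    and X: "X \<in> set_pmf (Pi_pmf {..<n} d (\<lambda>_. hmix_pmf w Q))"
    and mle: "is_npmle w \<theta>s n X Qh" and below: "\<forall>i<n. X i \<le> K" and b_bound: "\<And>x. \<bar>b x\<bar> \<le> B"
  shows "\<bar>\<Sum>x. b x * (hobs n X x - hmix w Qh x)\<bar>
    \<le> 4 * B * sqrt (chi2_statistic n X (hmix w Q) K + (1 - (\<Sum>x\<le>K. hmix w Q x)))"
proof -
  have Qh: "Qh \<in> mixing_measures \<theta>s" and h_pos: "\<And>i. i < n \<Longrightarrow> hmix w Qh (X i) > 0"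
    using mle by (auto simp: is_npmle_def)
  have q_pos: "\<And>i. i < n \<Longrightarrow> hmix w Q (X i) > 0"
    by (rule hmix_pos_on_sample[OF Q X])
  have lik: "(\<Sum>i<n. ln (hmix w Q (X i))) \<le> (\<Sum>i<n. ln (hmix w Qh (X i)))"
    using mle Q q_pos by (auto simp: is_npmle_def)
  have chi2: "(\<Sum>x\<in>X ` {..<n}. (hobs n X x)\<^sup>2 / hmix w Q x) - 1
      = chi2_statistic n X (hmix w Q) K + (1 - (\<Sum>x\<le>K. hmix w Q x))"
    unfolding chi2_statistic_def
    using below q_pos sum_hobs_sample[OF n] hobs_eq_0 by (intro chi2_eq_truncated) (auto simp: less_imp_neq[symmetric])
  show ?thesis
    using likelihood_deviation_le_chi2[OF n hmix_nonneg[OF Qh] sum_hmix_le_1[OF Qh] h_pos q_pos lik b_bound]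
    unfolding chi2 .
qed

lemma npmle_deviation_whp:
  assumes Q: "Q \<in> mixing_measures \<theta>s" and n: "n \<ge> 1" and \<delta>: "\<delta> > 0"
    and mle: "\<forall>X \<in> set_pmf (Pi_pmf {..<n} d (\<lambda>_. hmix_pmf w Q)). is_npmle w \<theta>s n X (Qhat X)"
    and tail: "1 - (\<Sum>x\<le>K. hmix w Q x) \<le> \<delta> / (2 * real n)"
    and r: "2 * real (K+1) / (real n * \<delta>) + \<delta> / (2 * real n) \<le> r"
  shows "1 - \<delta> \<le> measure_pmf.prob (Pi_pmf {..<n} d (\<lambda>_. hmix_pmf w Q))
    {X. \<forall>b. bounded (range b) \<longrightarrow>
       \<bar>\<Sum>x. b x * (hobs n X x - hmix w (Qhat X) x)\<bar> \<le> 4 * (SUP x. \<bar>b x\<bar>) * sqrt r}"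
proof -
  let ?P = "Pi_pmf {..<n} d (\<lambda>_. hmix_pmf w Q)"
  let ?good = "{X. (\<forall>i<n. X i \<le> K) \<and> chi2_statistic n X (hmix w Q) K < 2 * real (K+1) / (real n * \<delta>)}"
  have "1 - \<delta> \<le> measure_pmf.prob ?P ?good"
    using prob_sample_le_and_chi2_statistic_less[OF n \<delta>, of "hmix_pmf w Q" K d] tail
    by (simp add: pmf_hmix_pmf[OF Q])
  also have "\<dots> = measure_pmf.prob ?P (?good \<inter> set_pmf ?P)"
    by (simp add: measure_Int_set_pmf)
  also have "\<dots> \<le> measure_pmf.prob ?P {X. \<forall>b. bounded (range b) \<longrightarrow>
       \<bar>\<Sum>x. b x * (hobs n X x - hmix w (Qhat X) x)\<bar> \<le> 4 * (SUP x. \<bar>b x\<bar>) * sqrt r}"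
  proof (rule measure_pmf.finite_measure_mono, safe)
    fix X and b :: "nat \<Rightarrow> real"
    assume X: "X \<in> set_pmf ?P" and below: "\<forall>i<n. X i \<le> K"
      and chi2: "chi2_statistic n X (hmix w Q) K < 2 * real (K+1) / (real n * \<delta>)"
      and "bounded (range b)"
    then obtain M where "\<And>x. \<bar>b x\<bar> \<le> M" by (auto simp: bounded_iff)
    then have b: "\<bar>b x\<bar> \<le> (SUP x. \<bar>b x\<bar>)" for x
      by (intro cSUP_upper bdd_aboveI2) auto
    have "\<bar>\<Sum>x. b x * (hobs n X x - hmix w (Qhat X) x)\<bar>
        \<le> 4 * (SUP x. \<bar>b x\<bar>) * sqrt (chi2_statistic n X (hmix w Q) K + (1 - (\<Sum>x\<le>K. hmix w Q x)))"
      using mle X by (intro npmle_deviation_le_chi2_statistic[OF Q n X _ below b]) auto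
    also have "\<dots> \<le> 4 * (SUP x. \<bar>b x\<bar>) * sqrt r"
      using chi2 tail r b[of 0] by (intro mult_left_mono real_sqrt_le_mono) auto
    finally show "\<bar>\<Sum>x. b x * (hobs n X x - hmix w (Qhat X) x)\<bar> \<le> 4 * (SUP x. \<bar>b x\<bar>) * sqrt r" .
  qed simp
  finally show ?thesis .
qed

theorem npmle_deviation_rate:
  assumes \<epsilon>: "0 < \<epsilon>"
  shows "\<exists>C>0. \<forall>(Q :: real measure) (\<delta>::real) (n::nat) (Qhat :: (nat \<Rightarrow> nat) \<Rightarrow> real measure).
    Q \<in> mixing_measures \<theta>s \<longrightarrow> 0 < \<delta> \<longrightarrow> \<delta> < 1 \<longrightarrow> n \<ge> 1 \<longrightarrow>
    (\<forall>X \<in> set_pmf (Pi_pmf {..<n} d (\<lambda>_. hmix_pmf w Q)). is_npmle w \<theta>s n X (Qhat X)) \<longrightarrow>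
    1 - \<delta> \<le> measure_pmf.prob (Pi_pmf {..<n} d (\<lambda>_. hmix_pmf w Q))
      {X. \<forall>b :: nat \<Rightarrow> real. bounded (range b) \<longrightarrow>
         \<bar>\<Sum>x. b x * (hobs n X x - hmix w (Qhat X) x)\<bar>
           \<le> C * (SUP x. \<bar>b x\<bar>) * sqrt (1 / (real n powr (1 - \<epsilon>) * \<delta> powr (1 + \<epsilon>)))}"
proof -
  obtain A \<rho> where A: "1 \<le> A" "0 < \<rho>" "\<rho> < 1"
    and tail: "\<And>Q K. Q \<in> mixing_measures \<theta>s \<Longrightarrow> 1 - (\<Sum>x\<le>K. hmix w Q x) \<le> A * \<rho> ^ (K+1)"
    using hmix_tail_geometric by blast
  obtain c where c: "c > 0" and cutoff: "\<And>n \<delta>. n \<ge> 1 \<Longrightarrow> 0 < \<delta> \<Longrightarrow> \<delta> < 1 \<Longrightarrow>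
      \<exists>K. A * \<rho> ^ (K+1) \<le> \<delta> / (2 * real n) \<and> 2 * real (K+1) / (real n * \<delta>) + \<delta> / (2 * real n)
        \<le> c * (1 / (real n powr (1 - \<epsilon>) * \<delta> powr (1 + \<epsilon>)))"
    using geometric_cutoff[OF \<epsilon> A] by blast
  have "1 - \<delta> \<le> measure_pmf.prob (Pi_pmf {..<n} d (\<lambda>_. hmix_pmf w Q))
      {X. \<forall>b. bounded (range b) \<longrightarrow> \<bar>\<Sum>x. b x * (hobs n X x - hmix w (Qhat X) x)\<bar>
        \<le> 4 * sqrt c * (SUP x. \<bar>b x\<bar>) * sqrt (1 / (real n powr (1 - \<epsilon>) * \<delta> powr (1 + \<epsilon>)))}"
    if Q: "Q \<in> mixing_measures \<theta>s" and \<delta>: "0 < \<delta>" "\<delta> < 1" and n: "n \<ge> 1"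
      and mle: "\<forall>X \<in> set_pmf (Pi_pmf {..<n} d (\<lambda>_. hmix_pmf w Q)). is_npmle w \<theta>s n X (Qhat X)"
    for Q \<delta> n Qhat
  proof -
    obtain K where "A * \<rho> ^ (K+1) \<le> \<delta> / (2 * real n)"
      and r: "2 * real (K+1) / (real n * \<delta>) + \<delta> / (2 * real n)
        \<le> c * (1 / (real n powr (1 - \<epsilon>) * \<delta> powr (1 + \<epsilon>)))"
      using cutoff[OF n \<delta>] by blast
    with tail[OF Q, of K] have "1 - (\<Sum>x\<le>K. hmix w Q x) \<le> \<delta> / (2 * real n)"
      by linarith
    from npmle_deviation_whp[OF Q n \<delta>(1) mle this r] show ?thesis
      unfolding real_sqrt_mult by (simp only: mult_ac)
  qed
  with c show ?thesis
    by (intro exI[of _ "4 * sqrt c"]) auto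
qed

end

theorem lemma5p3:
  fixes w :: "nat \<Rightarrow> real" and \<theta>s :: real
  assumes \<theta>s_pos: "\<theta>s > 0"
    and w_pos: "\<And>x. w x > 0"
    and radius: "ereal \<theta>s < conv_radius w"
  shows "\<forall>\<epsilon>::real. 0 < \<epsilon> \<and> \<epsilon> < 1 \<longrightarrow>
    (\<exists>C>0. \<forall>(Q :: real measure) (\<delta>::real) (n::nat) (Qhat :: (nat \<Rightarrow> nat) \<Rightarrow> real measure).
       Q \<in> mixing_measures \<theta>s \<longrightarrow> 0 < \<delta> \<longrightarrow> \<delta> < 1 \<longrightarrow> n \<ge> 1 \<longrightarrow>
       (\<forall>X \<in> set_pmf (Pi_pmf {..<n} 0 (\<lambda>_. hmix_pmf w Q)). is_npmle w \<theta>s n X (Qhat X)) \<longrightarrow>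
       measure_pmf.prob (Pi_pmf {..<n} 0 (\<lambda>_. hmix_pmf w Q))
         {X. \<forall>b :: nat \<Rightarrow> real. bounded (range b) \<longrightarrow>
              \<bar>\<Sum>x. b x * (hobs n X x - hmix w (Qhat X) x)\<bar>
                \<le> C * (SUP x. \<bar>b x\<bar>) * sqrt (1 / (real n powr (1 - \<epsilon>) * \<delta> powr (1 + \<epsilon>)))}
         \<ge> 1 - \<delta>)"
  using discrete_exp_family.npmle_deviation_rate[OF discrete_exp_family.intro[OF assms]] by blast

end
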